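(* Define words over $\{\sigma,\tau\}$ by $W_0=\sigma$ and, for $1\le k\le n-4$, $$W_k=\tau\cdot\prod_{i=1}^{n-2}\sigma^i\,W_{\Delta(k,i)}\,\gamma_{n-2-i}.$$ Then for every $k\in\{1,\dots,n-4\}$ and every seed $\psi\notin Hub_n$ with $height(\psi)=k$, the permutation $\widetilde\psi$ precedes $\psi^{(n-1)}$ on $PATH(n)$ and the word of edge labels of the subpath of $PATH(n)$ from $\widetilde\psi$ to $\psi^{(n-1)}$ equals $W_k$.
   Context: Fix an integer $n\ge 5$. An $n$-permutation is a sequence $(a_1,\dots,a_n)$ of the distinct elements of $\{1,\dots,n\}$. For $\pi=(a_1,\dots,a_n)$ put $\sigma(\pi)=(a_2,\dots,a_n,a_1)$ and $\tau(\pi)=(a_2,a_1,a_3,\dots,a_n)$. On $\{1,\dots,n-1\}$ let $a\oplus 1=a+1$ for $a<n-1$ and $(n-1)\oplus 1=1$; $a\ominus 1$ is the unique $b$ with $b\oplus 1=a$, and $a\oplus j$, $a\ominus j$ denote $j$-fold iterates. A seed is an $(n-1)$-tuple $\psi=(a_1,\dots,a_{n-1})$ of distinct elements of $\{1,\dots,n\}$ with $a_1=n$ and $a_2\oplus1\notin\{a_1,\dots,a_{n-1}\}$; its missing element is $mis(\psi)=a_2\oplus 1$. The package $perms(\psi)$ is the set of all $n$-permutations obtained from $\psi$ by inserting $mis(\psi)$ at any position and then applying any cyclic rotation. For a seed $\psi=(a_1,\dots,a_{n-1})$ with $x=mis(\psi)$: $height(\psi)$ is the largest $k\in\{1,\dots,n-2\}$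 such that $a_i=a_{i+1}\oplus 1$ for all $2\le i\le k$; $\widetilde\psi=(a_1,x,a_2,\dots,a_{n-1})$; $\psi^{(n-1)}=(x,a_2,\dots,a_{n-1},a_1)$. $Hub_n$ is the set of the $n-1$ seeds $(n,b,b\ominus1,\dots,b\ominus(n-3))$, $b\in\{1,\dots,n-1\}$. $\Delta(k,i)=\min(k-1,n-2-i)$. Words over $\{\sigma,\tau\}$ act on permutations left to right; $\sigma^i$ is $i$ copies of $\sigma$, $\gamma_k=\sigma^k\tau$, and $\prod_{i=a}^b u_i$ is the concatenation $u_au_{a+1}\cdots u_b$. Let $\pi_0=(n,n-1,\dots,1)$. For a seed $\psi$ with $x=mis(\psi)$ let $E(\psi)$ be the set of labelled directed edges consisting of a $\tau$-edge $\pi\to\tau(\pi)$ for every $\pi\in perms(\psi)$ whose second entry is $x$, and a $\sigma$-edge $\pi\to\sigma(\pi)$ for every $\pi\in perms(\psi)$ whose second entry is not $x$. Let $P$ be the union of $E(\psi)$ over all seeds; delete from $P$ every $\sigma$-edge leaving a vertex that has an outgoing $\tau$-edge in $P$; then add the $\sigma$-edge $\pi_0\to\sigma(\pi_0)$ and delete the $\tau$-edges $\pi_0\to\tau(\pi_0)$ and $\tau(\sigma(\pi_0))\to\sigma(\pi_0)$. The resulting graph $PATH(n)$ is a Hamiltonian path on all $n!$ $n$-permutations (the Sawada–Williams $\sigma\tau$-path), starting at $\tau(\pi_0)$. *)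

theory Defs
  imports Main
begin

datatype lab = Sig | Tau

definition sig :: "nat list \<Rightarrow> nat list" where
  "sig p = tl p @ [hd p]"

definition tau :: "nat list \<Rightarrow> nat list" where
  "tau p = (p ! 1) # (p ! 0) # drop 2 p"

definition act1 :: "lab \<Rightarrow> nat list \<Rightarrow> nat list" where
  "act1 l p = (case l of Sig \<Rightarrow> sig p | Tau \<Rightarrow> tau p)"

text \<open>Words act left to right.\<close>
definition act :: "lab list \<Rightarrow> nat list \<Rightarrow> nat list" where
  "act w p = fold act1 w p"

definition is_nperm :: "nat \<Rightarrow> nat list \<Rightarrow> bool" where
  "is_nperm n p \<longleftrightarrow> length p = n \<and> distinct p \<and> set p = {1..n}"

definition oplus1 :: "nat \<Rightarrow> nat \<Rightarrow> nat" where
  "oplus1 n a = (if a < n - 1 then a + 1 else 1)"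

definition ominus1 :: "nat \<Rightarrow> nat \<Rightarrow> nat" where
  "ominus1 n a = (if 1 < a then a - 1 else n - 1)"

text \<open>Seeds (1-based entry a_i is list index i-1).\<close>
definition is_seed :: "nat \<Rightarrow> nat list \<Rightarrow> bool" where
  "is_seed n s \<longleftrightarrow> length s = n - 1 \<and> distinct s \<and> set s \<subseteq> {1..n} \<and>
     s ! 0 = n \<and> oplus1 n (s ! 1) \<notin> set s"

definition mis :: "nat \<Rightarrow> nat list \<Rightarrow> nat" where
  "mis n s = oplus1 n (s ! 1)"

definition perms :: "nat \<Rightarrow> nat list \<Rightarrow> nat list set" where
  "perms n s = {rotate r (take j s @ [mis n s] @ drop j s) | j r. j \<le> n - 1 \<and> r < n}"

definition height :: "nat \<Rightarrow> nat list \<Rightarrow> nat" where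
  "height n s = (GREATEST k. 1 \<le> k \<and> k \<le> n - 2 \<and>
      (\<forall>i. 2 \<le> i \<and> i \<le> k \<longrightarrow> s ! (i - 1) = oplus1 n (s ! i)))"

definition tilde :: "nat \<Rightarrow> nat list \<Rightarrow> nat list" where
  "tilde n s = hd s # mis n s # tl s"

definition psi_last :: "nat \<Rightarrow> nat list \<Rightarrow> nat list" where
  "psi_last n s = mis n s # tl s @ [hd s]"

definition Hub :: "nat \<Rightarrow> nat list set" where
  "Hub n = {n # map (\<lambda>j. (ominus1 n ^^ j) b) [0..<n - 2] | b. b \<in> {1..n - 1}}"

text \<open>W_k, with Delta(k,i) = min(k-1, n-2-i); gamma_j = sigma^j tau.\<close>
fun W :: "nat \<Rightarrow> nat \<Rightarrow> lab list" where
  "W n 0 = [Sig]"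
| "W n (Suc k) = Tau # concat (map (\<lambda>i. replicate i Sig @ W n (min k (n - 2 - i))
        @ replicate (n - 2 - i) Sig @ [Tau]) [1..<n - 1])"

definition E :: "nat \<Rightarrow> nat list \<Rightarrow> (nat list \<times> lab \<times> nat list) set" where
  "E n s = {(p, Tau, tau p) | p. p \<in> perms n s \<and> p ! 1 = mis n s}
         \<union> {(p, Sig, sig p) | p. p \<in> perms n s \<and> p ! 1 \<noteq> mis n s}"

definition pi0 :: "nat \<Rightarrow> nat list" where
  "pi0 n = rev [1..<n + 1]"

definition P0 :: "nat \<Rightarrow> (nat list \<times> lab \<times> nat list) set" where
  "P0 n = (\<Union>s \<in> {s. is_seed n s}. E n s)"

definition PATH :: "nat \<Rightarrow> (nat list \<times> lab \<times> nat list) set" where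
  "PATH n = ((P0 n - {(p, Sig, q) | p q. \<exists>r. (p, Tau, r) \<in> P0 n})
             \<union> {(pi0 n, Sig, sig (pi0 n))})
            - {(pi0 n, Tau, tau (pi0 n)), (tau (sig (pi0 n)), Tau, sig (pi0 n))}"

fun follows :: "(nat list \<times> lab \<times> nat list) set \<Rightarrow> nat list \<Rightarrow> lab list \<Rightarrow> bool" where
  "follows G p [] = True"
| "follows G p (l # w) = ((p, l, act1 l p) \<in> G \<and> follows G (act1 l p) w)"

end

theory Submission
  imports Defs
begin

(* Write x = mis psi and let ins j be psi with x inserted before entry j (0-based). The package of
   psi consists of the rotations of ins 0, ..., ins (n-1); tilde psi = ins 1 and
   psi^(n-1) = rotate 1 (ins 1). Inside the package the tau-edges of PATH(n) are exactly
   rotate (j-1) (ins j) -> rotate (j-1) (ins (j-1)); every other vertex keeps its sigma-edge, because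
   the only seed that could give it a tau-edge is the one obtained by deleting its second entry.
   So from ins 1 the path takes tau to ins 0 = rotate (n-1) (ins (n-1)), and then for j = n-1, ..., 2
   (the factor i = n - j of W_k) it takes sigma^i back to ins j. Deleting psi_1 from ins j gives a seed
   psi' with tilde psi' = ins j, psi'^(n-1) = rotate 1 (ins j) and height min (k-1) (j-2) = Delta(k,i),
   so by induction on k the word W_Delta(k,i) leads to rotate 1 (ins j), after which sigma^(j-2) tau
   reaches rotate (j-1) (ins (j-1)), where the next factor starts. *)

section \<open>Rotations\<close>

lemma remove1_rotate1:
  assumes "distinct xs"
  shows "\<exists>t. remove1 y (rotate1 xs) = rotate t (remove1 y xs)"
proof (cases xs)
  case Nil
  then show ?thesis by (intro exI[of _ 0]) simp
next
  case (Cons a xs')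
  show ?thesis
  proof (cases "a = y")
    case True
    then show ?thesis using assms Cons by (intro exI[of _ 0]) (simp add: remove1_append)
  next
    case False
    then have "remove1 y (rotate1 xs) = rotate1 (remove1 y xs)"
      using Cons by (simp add: remove1_append remove1_idem)
    then show ?thesis by (intro exI[of _ 1]) simp
  qed
qed

lemma remove1_rotate:
  assumes "distinct xs"
  shows "\<exists>t. remove1 y (rotate r xs) = rotate t (remove1 y xs)"
proof (induction r)
  case 0
  then show ?case by (intro exI[of _ 0]) simp
next
  case (Suc r)
  then obtain t where t: "remove1 y (rotate r xs) = rotate t (remove1 y xs)" by blast
  obtain t' where "remove1 y (rotate1 (rotate r xs)) = rotate t' (remove1 y (rotate r xs))"
    using remove1_rotate1[of "rotate r xs" y] assms by auto
  then show ?case using t by (auto simp: rotate_rotate)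
qed

lemma rotate_eq_rotate_imp_eq:
  assumes "rotate a xs = rotate b ys" "distinct xs" "length xs = length ys" "xs \<noteq> []"
    "xs ! 0 = ys ! 0"
  shows "xs = ys"
proof -
  let ?l = "length ys"
  define m where "m = ?l - b mod ?l + a"
  have "(?l - b mod ?l + b) mod ?l = 0"
    using assms(3,4) by (metis add.commute le_add_diff_inverse length_0_conv mod_add_left_eq
        mod_le_divisor mod_self neq0_conv)
  then have "ys = rotate (?l - b mod ?l) (rotate b ys)" by (simp add: rotate_rotate)
  also have "\<dots> = rotate m xs" using assms(1) by (simp add: m_def rotate_rotate[symmetric])
  finally have ys: "ys = rotate m xs" .
  have "xs ! (m mod length xs) = xs ! 0"
    using nth_rotate[of 0 xs m] assms(4,5) by (simp add: ys)
  then have "m mod length xs = 0" using assms(2,4) nth_eq_iff_index_eq[of xs _ 0] by simp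
  then show ?thesis using ys by simp
qed

lemma two_Cons_nth: "2 \<le> length xs \<Longrightarrow> xs = xs ! 0 # xs ! 1 # drop 2 xs"
  by (cases xs; cases "tl xs") auto

section \<open>Walks labelled by words\<close>

definition walk :: "(nat list \<times> lab \<times> nat list) set \<Rightarrow> nat list \<Rightarrow> lab list \<Rightarrow> nat list \<Rightarrow> bool"
  where "walk G p w q \<longleftrightarrow> follows G p w \<and> act w p = q"

lemma walk_Nil [simp]: "walk G p [] q \<longleftrightarrow> q = p"
  by (auto simp: walk_def act_def)

lemma walk_Cons: "walk G p (l # w) q \<longleftrightarrow> (p, l, act1 l p) \<in> G \<and> walk G (act1 l p) w q"
  by (simp add: walk_def act_def)

lemma walk_append: "walk G p u r \<Longrightarrow> walk G r v q \<Longrightarrow> walk G p (u @ v) q"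
proof (induction u arbitrary: p)
  case Nil
  then show ?case by simp
next
  case (Cons l u)
  then show ?case by (simp add: walk_Cons)
qed

lemma sig_eq_rotate1: "p \<noteq> [] \<Longrightarrow> sig p = rotate1 p"
  by (simp add: sig_def rotate1_hd_tl)

lemma walk_replicate_Sig:
  assumes "p \<noteq> []" "\<And>t. t < c \<Longrightarrow> (rotate t p, Sig, sig (rotate t p)) \<in> G"
  shows "walk G p (replicate c Sig) (rotate c p)"
  using assms
proof (induction c arbitrary: p)
  case 0
  then show ?case by simp
next
  case (Suc c)
  have "walk G (rotate1 p) (replicate c Sig) (rotate c (rotate1 p))"
    using Suc.prems(2)[of "Suc _"] by (intro Suc.IH) (simp_all add: Suc.prems(1) rotate1_rotate_swap)
  moreover have "(p, Sig, sig p) \<in> G" using Suc.prems(2)[of 0] by simp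
  ultimately show ?case
    using Suc.prems(1) by (simp add: walk_Cons act1_def sig_eq_rotate1 rotate1_rotate_swap)
qed

lemma walk_concat:
  assumes "\<And>i. a \<le> i \<Longrightarrow> i < b \<Longrightarrow> walk G (S i) (f i) (S (Suc i))" "a \<le> b"
  shows "walk G (S a) (concat (map f [a..<b])) (S b)"
  using assms
proof (induction b)
  case 0
  then show ?case by simp
next
  case (Suc b)
  show ?case
  proof (cases "a = Suc b")
    case False
    then have "a \<le> b" using Suc.prems(2) by simp
    then show ?thesis using Suc by (simp add: walk_append)
  qed simp
qed

section \<open>The cyclic successor and the height of a seed\<close>

lemma oplus1_range: "2 \<le> n \<Longrightarrow> 1 \<le> oplus1 n a \<and> oplus1 n a \<le> n - 1"
  by (auto simp: oplus1_def)

lemma oplus1_oplus1_neq: "4 \<le> n \<Longrightarrow> oplus1 n (oplus1 n a) \<noteq> a"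
  by (auto simp: oplus1_def split: if_splits)

lemma funpow_oplus1:
  assumes "2 \<le> n" "1 \<le> a" "a \<le> n - 1"
  shows "(oplus1 n ^^ m) a = (a - 1 + m) mod (n - 1) + 1"
proof (induction m)
  case 0
  then show ?case using assms by simp
next
  case (Suc m)
  let ?b = "(a - 1 + m) mod (n - 1)"
  have "?b < n - 1" using assms by simp
  then have "oplus1 n (?b + 1) = (a - 1 + Suc m) mod (n - 1) + 1"
    by (auto simp: oplus1_def mod_Suc)
  then show ?case using Suc by simp
qed

lemma add_mod_neq_self:
  fixes a m d :: nat
  assumes "a < d" "0 < m" "m < d"
  shows "(a + m) mod d \<noteq> a"
proof (cases "a + m < d")
  case False
  then have "(a + m) mod d = a + m - d" using assms by (simp add: le_mod_geq)
  then show ?thesis using assms False by simp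
qed (use assms in simp)

definition height_chain :: "nat \<Rightarrow> nat list \<Rightarrow> nat \<Rightarrow> bool" where
  "height_chain n s k \<longleftrightarrow>
     1 \<le> k \<and> k \<le> n - 2 \<and> (\<forall>i. 2 \<le> i \<and> i \<le> k \<longrightarrow> s ! (i - 1) = oplus1 n (s ! i))"

lemma height_eq_Greatest: "height n s = Greatest (height_chain n s)"
  unfolding height_def height_chain_def by simp

lemma height_chain_le_height: "height_chain n s h \<Longrightarrow> h \<le> height n s"
  unfolding height_eq_Greatest by (rule Greatest_le_nat[of _ h "n - 2"]) (auto simp: height_chain_def)

lemma height_chain_height:
  assumes "3 \<le> n"
  shows "height_chain n s (height n s)"
proof -
  have "height_chain n s 1" using assms by (simp add: height_chain_def)
  then show ?thesis
    unfolding height_eq_Greatest by (rule GreatestI_nat[of _ 1 "n - 2"]) (auto simp: height_chain_def)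
qed

lemma height_maximal:
  assumes "3 \<le> n" "height n s < n - 2"
  shows "s ! height n s \<noteq> oplus1 n (s ! Suc (height n s))"
proof
  assume "s ! height n s = oplus1 n (s ! Suc (height n s))"
  then have "height_chain n s (Suc (height n s))"
    using height_chain_height[OF assms(1), of s] assms(2)
    by (auto simp: height_chain_def le_Suc_eq)
  then show False using height_chain_le_height by fastforce
qed

lemma height_eqI:
  assumes "height_chain n s h" "h < n - 2 \<Longrightarrow> s ! h \<noteq> oplus1 n (s ! Suc h)"
  shows "height n s = h"
  unfolding height_eq_Greatest
proof (rule Greatest_equality)
  fix y
  assume y: "height_chain n s y"
  show "y \<le> h"
  proof (rule ccontr)
    assume "\<not> y \<le> h"
    have chain: "\<forall>i. 2 \<le> i \<and> i \<le> y \<longrightarrow> s ! (i - 1) = oplus1 n (s ! i)" and "y \<le> n - 2"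
      using y by (simp_all add: height_chain_def)
    moreover have "1 \<le> h" using assms(1) by (simp add: height_chain_def)
    ultimately have "s ! (Suc h - 1) = oplus1 n (s ! Suc h)" "h < n - 2"
      using chain[rule_format, of "Suc h"] \<open>\<not> y \<le> h\<close> by auto
    then show False using assms(2) by simp
  qed
qed (rule assms(1))

lemma height_chain_funpow:
  assumes "height_chain n s k" "1 \<le> e" "e \<le> k"
  shows "s ! 1 = (oplus1 n ^^ (e - 1)) (s ! e)"
  using assms(2,3)
proof (induction e)
  case (Suc e)
  show ?case
  proof (cases "e = 0")
    case False
    then have "s ! 1 = (oplus1 n ^^ (e - 1)) (s ! e)" using Suc by simp
    also have "s ! e = oplus1 n (s ! Suc e)"
      using assms(1)[unfolded height_chain_def] Suc.prems False by (auto dest!: spec[of _ "Suc e"])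
    finally show ?thesis using False by (simp add: funpow_swap1) (metis Suc_pred funpow_Suc_right neq0_conv o_apply)
  qed simp
qed simp

section \<open>Packages and the edges of PATH(n)\<close>

lemma seedD:
  assumes "is_seed n s"
  shows "length s = n - 1" "distinct s" "set s \<subseteq> {1..n}" "s ! 0 = n" "mis n s \<notin> set s"
  using assms by (auto simp: is_seed_def mis_def)

definition insert_mis :: "nat \<Rightarrow> nat list \<Rightarrow> nat \<Rightarrow> nat list" where
  "insert_mis n s j = take j s @ mis n s # drop j s"

lemma perms_eq: "perms n s = {rotate r (insert_mis n s j) | j r. j \<le> n - 1 \<and> r < n}"
  by (simp add: perms_def insert_mis_def)

lemma distinct_insert_mis:
  assumes "is_seed n s"
  shows "distinct (insert_mis n s j)"
proof -
  have "mis n s \<notin> set (take j s)" "mis n s \<notin> set (drop j s)"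
    using seedD(5)[OF assms] in_set_takeD in_set_dropD by metis+
  then show ?thesis
    using seedD(2)[OF assms] set_take_disj_set_drop_if_distinct by (auto simp: insert_mis_def)
qed

lemma remove1_mis_insert_mis: "is_seed n s \<Longrightarrow> remove1 (mis n s) (insert_mis n s j) = s"
  using seedD(5)[of n s] by (auto simp: insert_mis_def remove1_append dest: in_set_takeD)

lemma remove1_mis_perms:
  assumes "is_seed n s" "p \<in> perms n s"
  shows "\<exists>t. remove1 (mis n s) p = rotate t s"
proof -
  obtain j r where "p = rotate r (insert_mis n s j)" using assms(2) by (auto simp: perms_eq)
  then show ?thesis
    using remove1_rotate[OF distinct_insert_mis[OF assms(1)], of "mis n s" r]
      remove1_mis_insert_mis[OF assms(1)] by simp
qed

definition tau_source :: "nat \<Rightarrow> nat list \<Rightarrow> bool" where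
  "tau_source n p \<longleftrightarrow> (\<exists>r. (p, Tau, r) \<in> P0 n)"

lemma tau_source_iff: "tau_source n p \<longleftrightarrow> (\<exists>s. is_seed n s \<and> p \<in> perms n s \<and> p ! 1 = mis n s)"
  by (auto simp: tau_source_def P0_def E_def)

lemma not_tau_source_if_second_eq:
  assumes "2 \<le> n" "p ! 1 = n"
  shows "\<not> tau_source n p"
proof
  assume "tau_source n p"
  then obtain s where "p ! 1 = oplus1 n (s ! 1)" unfolding tau_source_iff mis_def by blast
  then show False using oplus1_range[OF assms(1), of "s ! 1"] assms by simp
qed

text \<open>A \<open>\<tau>\<close>-edge at \<open>p\<close> can only come from the seed obtained by deleting \<open>p ! 1\<close> from \<open>p\<close>
  and rotating \<open>n\<close> to the front, so it suffices to test that one candidate.\<close>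
lemma not_tau_source_if_mis_neq:
  assumes "remove1 (p ! 1) p = rotate t K" "distinct K" "length K = n - 1" "K ! 0 = n" "2 \<le> n"
    "oplus1 n (K ! 1) \<noteq> p ! 1"
  shows "\<not> tau_source n p"
proof
  assume "tau_source n p"
  then obtain s where s: "is_seed n s" "p \<in> perms n s" "p ! 1 = mis n s"
    unfolding tau_source_iff by blast
  obtain t' where "remove1 (mis n s) p = rotate t' s" using remove1_mis_perms s by blast
  then have "K = s"
    by (intro rotate_eq_rotate_imp_eq[of t K t' s]) (use assms(1-5) seedD[OF s(1)] s(3) in auto)
  then show False using assms(6) s(3) by (simp add: mis_def)
qed

lemma Sig_edge_in_PATH:
  assumes "is_seed n s" "p \<in> perms n s" "p ! 1 \<noteq> mis n s" "\<not> tau_source n p"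
  shows "(p, Sig, sig p) \<in> PATH n"
proof -
  have "(p, Sig, sig p) \<in> P0 n" using assms(1-3) unfolding P0_def E_def by blast
  then show ?thesis using assms(4) unfolding PATH_def tau_source_def by blast
qed

lemma Tau_edge_in_PATH:
  assumes "is_seed n s" "p \<in> perms n s" "p ! 1 = mis n s" "p \<noteq> pi0 n" "p \<noteq> tau (sig (pi0 n))"
  shows "(p, Tau, tau p) \<in> PATH n"
proof -
  have "(p, Tau, tau p) \<in> P0 n" using assms(1-3) unfolding P0_def E_def by blast
  then show ?thesis using assms(4,5) unfolding PATH_def by blast
qed

lemma rev_upt_n_minus_1: "3 \<le> n \<Longrightarrow> rev [1..<n - 1] = (n - 2) # rev [1..<n - 2]"
proof -
  assume "3 \<le> n"
  then obtain m where "n = m + 3" using le_Suc_ex by (metis add.commute)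
  then show ?thesis by (simp add: upt_Suc_append)
qed

lemma pi0_eq: "2 \<le> n \<Longrightarrow> pi0 n = n # (n - 1) # rev [1..<n - 1]"
proof -
  assume "2 \<le> n"
  then obtain m where "n = Suc (Suc m)" using le_Suc_ex by (metis add_2_eq_Suc)
  then show ?thesis by (simp add: pi0_def)
qed

lemma tau_sig_pi0_eq:
  assumes "3 \<le> n"
  shows "tau (sig (pi0 n)) = (n - 2) # (n - 1) # rev [1..<n - 2] @ [n]"
proof -
  have "pi0 n = n # (n - 1) # rev [1..<n - 1]" using assms by (intro pi0_eq) simp
  also have "rev [1..<n - 1] = (n - 2) # rev [1..<n - 2]" by (rule rev_upt_n_minus_1[OF assms])
  finally show ?thesis by (simp add: sig_def tau_def)
qed

section \<open>The package of a single seed\<close>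

locale seed =
  fixes n :: nat and \<psi> :: "nat list"
  assumes n_ge_5: "5 \<le> n" and is_seed: "is_seed n \<psi>"
begin

abbreviation ins :: "nat \<Rightarrow> nat list" where
  "ins \<equiv> insert_mis n \<psi>"

lemma length_seed: "length \<psi> = n - 1"
  and distinct_seed: "distinct \<psi>"
  and set_seed: "set \<psi> \<subseteq> {1..n}"
  and nth0_seed: "\<psi> ! 0 = n"
  and mis_notin_seed: "mis n \<psi> \<notin> set \<psi>"
  using seedD[OF is_seed] by simp_all

lemma mis_range: "1 \<le> mis n \<psi> \<and> mis n \<psi> \<le> n - 1"
  using oplus1_range n_ge_5 by (simp add: mis_def)

lemma seed_eq_Cons: "\<psi> = n # tl \<psi>"
  using length_seed nth0_seed n_ge_5 by (cases \<psi>) auto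

lemma nth_seed_neq_n: "1 \<le> e \<Longrightarrow> e < n - 1 \<Longrightarrow> \<psi> ! e \<noteq> n"
  using nth_eq_iff_index_eq[OF distinct_seed, of e 0] length_seed nth0_seed by simp

lemma nth_seed_neq_mis: "e < n - 1 \<Longrightarrow> \<psi> ! e \<noteq> mis n \<psi>"
  using mis_notin_seed length_seed nth_mem[of e \<psi>] by fastforce

lemma length_ins: "j \<le> n - 1 \<Longrightarrow> length (ins j) = n"
  using length_seed n_ge_5 by (simp add: insert_mis_def)

lemma distinct_ins: "distinct (ins j)"
  using distinct_insert_mis[OF is_seed] .

lemma set_ins: "set (ins j) = insert (mis n \<psi>) (set \<psi>)"
  by (metis Un_insert_right append_take_drop_id insert_mis_def list.simps(15) set_append)

lemma nth_ins:
  assumes "e < n" "j \<le> n - 1"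
  shows "ins j ! e = (if e < j then \<psi> ! e else if e = j then mis n \<psi> else \<psi> ! (e - 1))"
  using assms length_seed by (auto simp: insert_mis_def nth_append min_def nth_Cons' nth_drop)

lemma rotate_ins_in_perms: "j \<le> n - 1 \<Longrightarrow> r < n \<Longrightarrow> rotate r (ins j) \<in> perms n \<psi>"
  unfolding perms_eq by auto

lemma rotate_ins_eq:
  assumes "1 \<le> j" "j \<le> n - 1"
  shows "rotate (j - 1) (ins j) = \<psi> ! (j - 1) # mis n \<psi> # drop j \<psi> @ take (j - 1) \<psi>"
    and "rotate (j - 1) (ins (j - 1)) = mis n \<psi> # \<psi> ! (j - 1) # drop j \<psi> @ take (j - 1) \<psi>"
proof -
  have jl: "j - 1 < length \<psi>" and len: "length (take (j - 1) \<psi>) = j - 1"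
    using assms length_seed by auto
  have "take j \<psi> = take (j - 1) \<psi> @ [\<psi> ! (j - 1)]"
    using take_Suc_conv_app_nth[OF jl] assms by simp
  then have "ins j = take (j - 1) \<psi> @ (\<psi> ! (j - 1) # mis n \<psi> # drop j \<psi>)"
    by (simp add: insert_mis_def)
  then show "rotate (j - 1) (ins j) = \<psi> ! (j - 1) # mis n \<psi> # drop j \<psi> @ take (j - 1) \<psi>"
    using rotate_append[of "take (j - 1) \<psi>"] len by simp
  have "drop (j - 1) \<psi> = \<psi> ! (j - 1) # drop j \<psi>"
    using Cons_nth_drop_Suc[OF jl] assms by simp
  then have "ins (j - 1) = take (j - 1) \<psi> @ (mis n \<psi> # \<psi> ! (j - 1) # drop j \<psi>)"
    by (simp add: insert_mis_def)
  then show "rotate (j - 1) (ins (j - 1)) = mis n \<psi> # \<psi> ! (j - 1) # drop j \<psi> @ take (j - 1) \<psi>"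
    using rotate_append[of "take (j - 1) \<psi>"] len by simp
qed

lemma tau_rotate_ins:
  "1 \<le> j \<Longrightarrow> j \<le> n - 1 \<Longrightarrow> tau (rotate (j - 1) (ins j)) = rotate (j - 1) (ins (j - 1))"
  using rotate_ins_eq by (simp add: tau_def)

lemma tilde_eq_ins: "tilde n \<psi> = ins 1"
  using seed_eq_Cons by (cases \<psi>) (auto simp: tilde_def insert_mis_def)

lemma psi_last_eq_rotate_ins: "psi_last n \<psi> = rotate 1 (ins 1)"
  using seed_eq_Cons by (cases \<psi>) (auto simp: psi_last_def insert_mis_def)

lemma rotate_ins_last: "rotate (n - 1) (ins (n - 1)) = ins 0"
  using rotate_append[of \<psi> "[mis n \<psi>]"] length_seed by (simp add: insert_mis_def)

lemma ins_front:
  assumes "2 \<le> j" "j \<le> n - 1"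
  shows "ins j ! 0 = n" "ins j ! 1 = \<psi> ! 1" "ins j = n # \<psi> ! 1 # drop 2 (ins j)"
proof -
  show 0: "ins j ! 0 = n" and 1: "ins j ! 1 = \<psi> ! 1"
    using nth_ins[of 0 j] nth_ins[of 1 j] assms n_ge_5 nth0_seed by simp_all
  have "2 \<le> length (ins j)" using length_ins[of j] assms n_ge_5 by simp
  then show "ins j = n # \<psi> ! 1 # drop 2 (ins j)" using two_Cons_nth 0 1 by metis
qed

lemma Sig_edge_at_rotate_ins:
  assumes "2 \<le> j" "j \<le> n - 1" "m < n" "(m + 1) mod n \<noteq> 1" "(m + 1) mod n \<noteq> j"
  shows "(rotate m (ins j), Sig, sig (rotate m (ins j))) \<in> PATH n"
proof -
  let ?e = "(m + 1) mod n" and ?p = "rotate m (ins j)"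
  have len: "length (ins j) = n" using length_ins assms by simp
  have second: "?p ! 1 = ins j ! ?e" using nth_rotate[of 1 "ins j" m] len n_ge_5 by simp
  have e: "?e < n" "j < n" using assms n_ge_5 by simp_all
  have inj: "\<And>a b. a < n \<Longrightarrow> b < n \<Longrightarrow> ins j ! a = ins j ! b \<longleftrightarrow> a = b"
    using nth_eq_iff_index_eq[OF distinct_ins] len by simp
  have "ins j ! j = mis n \<psi>" using nth_ins[of j j] e by simp
  then have not_mis: "?p ! 1 \<noteq> mis n \<psi>" using inj[OF e] assms(5) second by simp
  have "\<not> tau_source n ?p"
  proof (cases "?e = 0")
    case True
    then show ?thesis
      using not_tau_source_if_second_eq n_ge_5 second ins_front assms by simp
  next
    case False
    let ?y = "ins j ! ?e"
    obtain t where t: "remove1 ?y ?p = rotate t (remove1 ?y (ins j))"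
      using remove1_rotate[OF distinct_ins] by blast
    have "?y \<noteq> n" "?y \<noteq> \<psi> ! 1"
      using inj[OF e(1), of 0] inj[OF e(1), of 1] False assms(4) ins_front[OF assms(1,2)] n_ge_5
      by auto
    then have K: "remove1 ?y (ins j) = n # \<psi> ! 1 # remove1 ?y (drop 2 (ins j))"
      using ins_front(3)[OF assms(1,2)] by (metis remove1.simps(2))
    have "?y \<in> set (ins j)" using e len by simp
    then have "length (remove1 ?y (ins j)) = n - 1" using len by (simp add: length_remove1)
    then show ?thesis
      using not_tau_source_if_mis_neq[of ?p t "remove1 ?y (ins j)" n] t K distinct_ins n_ge_5
        second not_mis
      by (simp add: mis_def)
  qed
  then show ?thesis
    using Sig_edge_in_PATH[OF is_seed rotate_ins_in_perms not_mis] assms by simp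
qed

lemma Sig_edge_at_ins:
  assumes "2 \<le> j" "j \<le> n - 1" "oplus1 n (ins j ! 2) \<noteq> \<psi> ! 1"
  shows "(ins j, Sig, sig (ins j)) \<in> PATH n"
proof -
  note small = ins_front[OF assms(1,2)]
  have len: "length (ins j) = n" using length_ins assms by simp
  have not_mis: "ins j ! 1 \<noteq> mis n \<psi>" using nth_seed_neq_mis[of 1] n_ge_5 small by simp
  have "\<psi> ! 1 \<noteq> n" using nth_seed_neq_n[of 1] n_ge_5 by simp
  then have "remove1 (ins j ! 1) (ins j) = rotate 0 (n # drop 2 (ins j))"
    using small by (metis remove1.simps(2) rotate0 id_apply)
  moreover have "distinct (n # \<psi> ! 1 # drop 2 (ins j))" using distinct_ins[of j] small(3) by metis
  then have "distinct (n # drop 2 (ins j))" by simp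
  moreover have "(n # drop 2 (ins j)) ! 1 = ins j ! 2" using len n_ge_5 by simp
  ultimately have "\<not> tau_source n (ins j)"
    using not_tau_source_if_mis_neq[of "ins j" 0 "n # drop 2 (ins j)" n] len n_ge_5 assms(3) small
    by simp
  moreover have "ins j \<in> perms n \<psi>" using rotate_ins_in_perms[of j 0] assms n_ge_5 by simp
  ultimately show ?thesis using Sig_edge_in_PATH is_seed not_mis by blast
qed

lemma rotate_ins_neq_pi0:
  assumes "1 \<le> j" "j \<le> n - 1" "tl \<psi> \<noteq> rev [1..<n - 1]"
  shows "rotate (j - 1) (ins j) \<noteq> pi0 n"
proof (cases "j = 1")
  case True
  have "ins 1 = n # mis n \<psi> # tl \<psi>"
    using tilde_eq_ins seed_eq_Cons by (metis list.sel(1) tilde_def)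
  then have "rotate (j - 1) (ins j) = n # mis n \<psi> # tl \<psi>" using True by simp
  then show ?thesis using pi0_eq[of n] n_ge_5 assms(3) by simp
next
  case False
  then have "\<psi> ! (j - 1) \<noteq> n" using nth_seed_neq_n assms by simp
  then show ?thesis using rotate_ins_eq(1)[OF assms(1,2)] pi0_eq[of n] n_ge_5 by simp
qed

lemma rotate_ins_neq_tau_sig_pi0:
  assumes "1 \<le> j" "j \<le> n - 1" "tl \<psi> \<noteq> rev [1..<n - 1]"
  shows "rotate (j - 1) (ins j) \<noteq> tau (sig (pi0 n))"
proof -
  have tsp: "tau (sig (pi0 n)) = (n - 2) # (n - 1) # rev [1..<n - 2] @ [n]"
    using tau_sig_pi0_eq n_ge_5 by simp
  consider "j = 1" | "j = 2" | "3 \<le> j" using assms(1) by linarith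
  then show ?thesis
  proof cases
    case 1
    then show ?thesis using rotate_ins_eq(1)[OF assms(1,2)] nth0_seed tsp n_ge_5 by simp
  next
    case 2
    have "tl \<psi> = \<psi> ! 1 # drop 2 \<psi>"
      using length_seed n_ge_5 by (cases \<psi>; cases "tl \<psi>") auto
    moreover have "take 1 \<psi> = [n]" using seed_eq_Cons by (cases \<psi>) auto
    ultimately show ?thesis
      using rotate_ins_eq(1)[OF assms(1,2)] 2 tsp assms(3) rev_upt_n_minus_1[of n] n_ge_5
      by auto
  next
    case 3
    have ne: "take (j - 1) \<psi> \<noteq> []" using 3 length_seed n_ge_5 by (cases \<psi>) auto
    then have "last (rotate (j - 1) (ins j)) = last (take (j - 1) \<psi>)"
      using rotate_ins_eq(1)[OF assms(1,2)] by simp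
    also have "\<dots> = \<psi> ! (j - 2)"
      using ne 3 length_seed assms(2) by (auto simp: last_conv_nth min_def numeral_2_eq_2)
    finally have "last (rotate (j - 1) (ins j)) = \<psi> ! (j - 2)" .
    moreover have "\<psi> ! (j - 2) \<noteq> n" using nth_seed_neq_n 3 assms(2) by simp
    ultimately show ?thesis using tsp by auto
  qed
qed

lemma Tau_edge_at_rotate_ins:
  assumes "1 \<le> j" "j \<le> n - 1" "tl \<psi> \<noteq> rev [1..<n - 1]"
  shows "(rotate (j - 1) (ins j), Tau, rotate (j - 1) (ins (j - 1))) \<in> PATH n"
proof -
  have "rotate (j - 1) (ins j) ! 1 = mis n \<psi>" using rotate_ins_eq(1)[OF assms(1,2)] by simp
  then have "(rotate (j - 1) (ins j), Tau, tau (rotate (j - 1) (ins j))) \<in> PATH n"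
    using rotate_ins_neq_pi0[OF assms] rotate_ins_neq_tau_sig_pi0[OF assms] assms n_ge_5
    by (intro Tau_edge_in_PATH[OF is_seed rotate_ins_in_perms]) simp_all
  then show ?thesis using tau_rotate_ins[OF assms(1,2)] by simp
qed

lemma height_chain_seed: "height_chain n \<psi> (height n \<psi>)"
  using height_chain_height n_ge_5 by simp

lemma seed_chain:
  "2 \<le> i \<Longrightarrow> i \<le> height n \<psi> \<Longrightarrow> \<psi> ! (i - 1) = oplus1 n (\<psi> ! i)"
  using height_chain_seed by (simp add: height_chain_def)

text \<open>The two \<open>\<tau>\<close>-edges removed from \<open>PATH n\<close> lie in the package of the seed
  \<open>(n, n - 2, \<dots>, 1)\<close>, whose height is \<open>n - 2\<close>.\<close>
lemma tl_seed_neq_rev_upt: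
  assumes "height n \<psi> < n - 2"
  shows "tl \<psi> \<noteq> rev [1..<n - 1]"
proof
  assume tl: "tl \<psi> = rev [1..<n - 1]"
  have nth: "\<psi> ! i = n - 1 - i" if "1 \<le> i" "i \<le> n - 2" for i
  proof -
    have "\<psi> ! i = tl \<psi> ! (i - 1)" using that length_seed by (simp add: nth_tl)
    also have "\<dots> = n - 1 - i" using that n_ge_5 by (simp add: tl rev_nth)
    finally show ?thesis .
  qed
  have "height_chain n \<psi> (n - 2)"
    unfolding height_chain_def using nth n_ge_5 by (auto simp: oplus1_def)
  then show False using height_chain_le_height assms by fastforce
qed

text \<open>The chain \<open>\<psi> ! 1, \<dots>, \<psi> ! height\<close> together with \<open>mis n \<psi> = \<psi> ! 1 \<oplus> 1\<close> is a cyclic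
  interval of fewer than \<open>n - 1\<close> consecutive values, so it cannot wrap around to
  \<open>mis n \<psi> \<oplus> 1\<close>.\<close>
lemma nth_seed_neq_oplus1_mis:
  assumes "height n \<psi> \<le> n - 4" "1 \<le> e" "e \<le> height n \<psi>"
  shows "\<psi> ! e \<noteq> oplus1 n (mis n \<psi>)"
proof
  let ?f = "oplus1 n" and ?x = "mis n \<psi>"
  assume h: "\<psi> ! e = ?f ?x"
  have "?x = ?f (\<psi> ! 1)" by (simp add: mis_def)
  also have "\<psi> ! 1 = (?f ^^ (e - 1)) (?f ?x)"
    using height_chain_funpow[OF height_chain_seed] assms(2,3) h by simp
  also have "?f ((?f ^^ (e - 1)) (?f ?x)) = (?f ^^ Suc e) ?x"
    using assms(2) by (cases e) (simp_all add: funpow_swap1)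
  also have "\<dots> = (?x - 1 + Suc e) mod (n - 1) + 1"
    by (rule funpow_oplus1) (use mis_range n_ge_5 in simp_all)
  finally have "(?x - 1 + Suc e) mod (n - 1) = ?x - 1" using mis_range by linarith
  then show False
    using add_mod_neq_self[of "?x - 1" "n - 1" "Suc e"] mis_range assms n_ge_5 by linarith
qed

definition sub_seed :: "nat \<Rightarrow> nat list" where
  "sub_seed j = n # drop 2 (ins j)"

context
  fixes j :: nat
  assumes height_ge_2: "2 \<le> height n \<psi>" and j_ge_3: "3 \<le> j" and j_le: "j \<le> n - 1"
begin

lemma ins_eq: "ins j = n # \<psi> ! 1 # drop 2 (ins j)"
  using ins_front(3)[of j] j_ge_3 j_le by simp

lemma mis_sub_seed: "mis n (sub_seed j) = \<psi> ! 1"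
proof -
  have "sub_seed j ! 1 = \<psi> ! 2"
    using nth_ins[of 2 j] length_ins[of j] j_ge_3 j_le n_ge_5 by (simp add: sub_seed_def)
  then show ?thesis using seed_chain[of 2] height_ge_2 by (simp add: mis_def)
qed

lemma is_seed_sub_seed: "is_seed n (sub_seed j)"
proof -
  have "distinct (n # \<psi> ! 1 # drop 2 (ins j))"
    using distinct_ins[of j] by (simp only: ins_eq[symmetric])
  moreover have "set (ins j) \<subseteq> {1..n}" using set_ins set_seed mis_range by auto
  then have "set (drop 2 (ins j)) \<subseteq> {1..n}" by (meson in_set_dropD subset_iff)
  ultimately show ?thesis
    using mis_sub_seed length_ins[of j] j_le n_ge_5 unfolding is_seed_def mis_def
    by (auto simp: sub_seed_def)
qed

lemma tilde_sub_seed: "tilde n (sub_seed j) = ins j"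
proof -
  have "tilde n (sub_seed j) = n # \<psi> ! 1 # drop 2 (ins j)"
    unfolding tilde_def mis_sub_seed by (simp add: sub_seed_def)
  then show ?thesis by (rule trans[OF _ ins_eq[symmetric]])
qed

lemma psi_last_sub_seed: "psi_last n (sub_seed j) = rotate 1 (ins j)"
proof -
  have "rotate 1 (ins j) = rotate1 (n # \<psi> ! 1 # drop 2 (ins j))" by (subst ins_eq) simp
  then show ?thesis unfolding psi_last_def mis_sub_seed by (simp add: sub_seed_def)
qed

lemma nth_sub_seed: "1 \<le> i \<Longrightarrow> i < n - 1 \<Longrightarrow> sub_seed j ! i = ins j ! (i + 1)"
  using length_ins[of j] j_le by (cases i) (auto simp: sub_seed_def)

text \<open>Entries \<open>2, \<dots>, j - 1\<close> of \<open>\<psi>\<close> move one place to the left, so the chain of the sub-seed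
  ends either with the chain of \<open>\<psi>\<close> or at the inserted missing element.\<close>
lemma height_sub_seed:
  assumes "height n \<psi> \<le> n - 4"
  shows "height n (sub_seed j) = min (height n \<psi> - 1) (j - 2)"
proof (rule height_eqI)
  let ?k = "height n \<psi>" and ?h = "min (height n \<psi> - 1) (j - 2)"
  have shift: "sub_seed j ! i = \<psi> ! (i + 1)" if "1 \<le> i" "i + 1 < j" for i
    using nth_sub_seed[of i] nth_ins[of "i + 1" j] that j_le by simp
  show "height_chain n (sub_seed j) ?h"
    unfolding height_chain_def
  proof (intro conjI allI impI)
    fix i assume i: "2 \<le> i \<and> i \<le> ?h"
    have "1 \<le> i - 1" "i - 1 + 1 < j" "i + 1 \<le> height n \<psi>" "i + 1 < j"
      using i j_ge_3 by auto
    then have "sub_seed j ! (i - 1) = \<psi> ! i" using shift[of "i - 1"] i by simp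
    also have "\<psi> ! i = oplus1 n (\<psi> ! (i + 1))" using seed_chain[of "i + 1"] i \<open>i + 1 \<le> _\<close> by simp
    also have "\<psi> ! (i + 1) = sub_seed j ! i" using shift[of i] i \<open>i + 1 < j\<close> by simp
    finally show "sub_seed j ! (i - 1) = oplus1 n (sub_seed j ! i)" .
  qed (use height_ge_2 j_ge_3 assms in auto)
  show "sub_seed j ! ?h \<noteq> oplus1 n (sub_seed j ! Suc ?h)"
  proof (cases "?h + 2 < j")
    case True
    then have "?h = ?k - 1" by linarith
    then show ?thesis
      using shift[of ?h] shift[of "Suc ?h"] True height_ge_2 height_maximal[of n \<psi>] assms n_ge_5
      by simp
  next
    case False
    then have h: "?h = j - 2" "j - 1 \<le> height n \<psi>"
      using j_ge_3 height_ge_2 by (auto simp: min_def split: if_splits)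
    have "sub_seed j ! (j - 2) = \<psi> ! (j - 2 + 1)" using shift[of "j - 2"] j_ge_3 by auto
    also have "j - 2 + 1 = j - 1" using j_ge_3 by simp
    finally have "sub_seed j ! (j - 2) = \<psi> ! (j - 1)" .
    moreover have "sub_seed j ! (j - 1) = ins j ! j"
      using nth_sub_seed[of "j - 1"] j_ge_3 j_le by simp
    moreover have "ins j ! j = mis n \<psi>" using nth_ins[of j j] j_le n_ge_5 by simp
    moreover have "\<psi> ! (j - 1) \<noteq> oplus1 n (mis n \<psi>)"
      using nth_seed_neq_oplus1_mis[of "j - 1"] h(2) j_ge_3 assms by simp
    moreover have "Suc (j - 2) = j - 1" using j_ge_3 by simp
    ultimately show ?thesis unfolding h(1) by simp
  qed
qed

end

end

section \<open>The words W_k\<close>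

definition W_traverses :: "nat \<Rightarrow> nat \<Rightarrow> bool" where
  "W_traverses n k \<longleftrightarrow>
     (\<forall>s. is_seed n s \<and> height n s = k \<longrightarrow> walk (PATH n) (tilde n s) (W n k) (psi_last n s))"

context seed
begin

lemma walk_Sig_rotate_ins:
  assumes "2 \<le> j" "j \<le> n - 1" "a + c \<le> n"
    and "\<And>m. a \<le> m \<Longrightarrow> m < a + c \<Longrightarrow> (m + 1) mod n \<noteq> 1 \<and> (m + 1) mod n \<noteq> j"
  shows "walk (PATH n) (rotate a (ins j)) (replicate c Sig) (rotate (a + c) (ins j))"
proof -
  have "walk (PATH n) (rotate a (ins j)) (replicate c Sig) (rotate c (rotate a (ins j)))"
  proof (rule walk_replicate_Sig)
    show "rotate a (ins j) \<noteq> []" using length_ins[of j] assms(2) n_ge_5 by auto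
    fix t assume "t < c"
    then show "(rotate t (rotate a (ins j)), Sig, sig (rotate t (rotate a (ins j)))) \<in> PATH n"
      using Sig_edge_at_rotate_ins[of j "t + a"] assms by (simp add: rotate_rotate)
  qed
  then show ?thesis by (simp add: rotate_rotate add.commute)
qed

context
  assumes IH: "\<And>d. 1 \<le> d \<Longrightarrow> d < height n \<psi> \<Longrightarrow> W_traverses n d"
    and height_le: "height n \<psi> \<le> n - 4"
begin

lemma walk_W_at_ins:
  assumes "2 \<le> j" "j \<le> n - 1"
  shows "walk (PATH n) (ins j) (W n (min (height n \<psi> - 1) (j - 2))) (rotate 1 (ins j))"
proof (cases "min (height n \<psi> - 1) (j - 2) = 0")
  case True
  have "oplus1 n (ins j ! 2) \<noteq> \<psi> ! 1"
  proof (cases "j = 2")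
    case True
    then show ?thesis
      using nth_ins[of 2 j] oplus1_oplus1_neq[of n "\<psi> ! 1"] assms(2) n_ge_5 by (simp add: mis_def)
  next
    case False
    then have "height n \<psi> = 1" using True height_chain_seed assms(1) by (auto simp: height_chain_def)
    then have "\<psi> ! 1 \<noteq> oplus1 n (\<psi> ! 2)"
      using height_maximal[of n \<psi>] n_ge_5 by (simp add: numeral_2_eq_2)
    then show ?thesis using nth_ins[of 2 j] False assms n_ge_5 by auto
  qed
  then have "(ins j, Sig, sig (ins j)) \<in> PATH n" using Sig_edge_at_ins assms by blast
  moreover have "ins j \<noteq> []" using length_ins[of j] assms(2) n_ge_5 by auto
  ultimately show ?thesis using True by (simp add: walk_Cons act1_def sig_eq_rotate1)
next
  case False
  let ?d = "min (height n \<psi> - 1) (j - 2)"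
  have sub: "2 \<le> height n \<psi>" "3 \<le> j" "j \<le> n - 1" using False assms(2) by auto
  have "W_traverses n ?d" using False by (intro IH) auto
  then have "walk (PATH n) (tilde n (sub_seed j)) (W n ?d) (psi_last n (sub_seed j))"
    using is_seed_sub_seed[OF sub] height_sub_seed[OF sub height_le] by (simp add: W_traverses_def)
  then show ?thesis by (simp only: tilde_sub_seed[OF sub] psi_last_sub_seed[OF sub])
qed

text \<open>The factor sigma^i W_Delta(k,i) gamma_(n-2-i) of W_k, with \<open>j = n - i\<close>.\<close>
lemma walk_block:
  assumes "2 \<le> j" "j \<le> n - 1"
  shows "walk (PATH n) (rotate j (ins j))
           (replicate (n - j) Sig @ W n (min (height n \<psi> - 1) (j - 2)) @ replicate (j - 2) Sig @ [Tau])
           (rotate (j - 1) (ins (j - 1)))"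
proof -
  have "walk (PATH n) (rotate j (ins j)) (replicate (n - j) Sig) (rotate (j + (n - j)) (ins j))"
  proof (rule walk_Sig_rotate_ins)
    fix m assume "j \<le> m" "m < j + (n - j)"
    moreover have "m + 1 \<le> n" using \<open>m < j + (n - j)\<close> assms(2) by simp
    ultimately show "(m + 1) mod n \<noteq> 1 \<and> (m + 1) mod n \<noteq> j"
      using assms(1) by (cases "m + 1 = n") auto
  qed (use assms in auto)
  moreover have "rotate (j + (n - j)) (ins j) = ins j" using length_ins[of j] assms(2) by simp
  ultimately have to_ins: "walk (PATH n) (rotate j (ins j)) (replicate (n - j) Sig) (ins j)"
    by simp
  have "1 + (j - 2) = j - 1" using assms(1) by simp
  then have to_tau: "walk (PATH n) (rotate 1 (ins j)) (replicate (j - 2) Sig) (rotate (j - 1) (ins j))"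
    using walk_Sig_rotate_ins[of j 1 "j - 2"] assms n_ge_5 by auto
  have "tl \<psi> \<noteq> rev [1..<n - 1]" using tl_seed_neq_rev_upt height_le n_ge_5 by simp
  then have "walk (PATH n) (rotate (j - 1) (ins j)) [Tau] (rotate (j - 1) (ins (j - 1)))"
    using Tau_edge_at_rotate_ins[of j] tau_rotate_ins[of j] assms
    by (simp add: walk_Cons act1_def)
  then show ?thesis
    by (intro walk_append[OF to_ins] walk_append[OF walk_W_at_ins[OF assms]] walk_append[OF to_tau])
qed

lemma walk_tilde_psi_last:
  assumes "1 \<le> height n \<psi>"
  shows "walk (PATH n) (tilde n \<psi>) (W n (height n \<psi>)) (psi_last n \<psi>)"
proof -
  define f where "f i = replicate i Sig @ W n (min (height n \<psi> - 1) (n - 2 - i))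
    @ replicate (n - 2 - i) Sig @ [Tau]" for i
  define S where "S i = rotate (n - i) (ins (n - i))" for i
  obtain k' where k': "height n \<psi> = Suc k'" using assms by (cases "height n \<psi>") auto
  have W: "W n (height n \<psi>) = Tau # concat (map f [1..<n - 1])"
    unfolding f_def k' by simp
  have "tl \<psi> \<noteq> rev [1..<n - 1]" using tl_seed_neq_rev_upt height_le n_ge_5 by simp
  then have "walk (PATH n) (ins 1) [Tau] (S 1)"
    using Tau_edge_at_rotate_ins[of 1] tau_rotate_ins[of 1] rotate_ins_last n_ge_5
    by (simp add: walk_Cons act1_def S_def)
  moreover have "walk (PATH n) (S 1) (concat (map f [1..<n - 1])) (S (n - 1))"
  proof (rule walk_concat)
    fix i assume i: "1 \<le> i" "i < n - 1"
    then have e: "n - (n - i) = i" "n - i - 2 = n - 2 - i" "n - i - 1 = n - Suc i" by auto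
    have "walk (PATH n) (S i) (f i) (rotate (n - i - 1) (ins (n - i - 1)))"
      using walk_block[of "n - i"] i unfolding S_def f_def e(1,2) by simp
    then show "walk (PATH n) (S i) (f i) (S (Suc i))" unfolding S_def e(3) .
  qed (use n_ge_5 in simp)
  moreover have "S (n - 1) = psi_last n \<psi>" using psi_last_eq_rotate_ins n_ge_5 by (simp add: S_def)
  ultimately show ?thesis
    unfolding W tilde_eq_ins using walk_append by fastforce
qed

end

end

lemma W_traverses_all:
  assumes "5 \<le> n" "1 \<le> k" "k \<le> n - 4"
  shows "W_traverses n k"
  using assms(2,3)
proof (induction k rule: less_induct)
  case (less k)
  show ?case
    unfolding W_traverses_def
  proof (intro allI impI)
    fix s assume "is_seed n s \<and> height n s = k"
    then interpret seed n s using assms(1) by unfold_locales auto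
    show "walk (PATH n) (tilde n s) (W n k) (psi_last n s)"
      using walk_tilde_psi_last less \<open>is_seed n s \<and> height n s = k\<close> by auto
  qed
qed

theorem mainTheorem5:
  fixes n k :: nat and s :: "nat list"
  assumes "n \<ge> 5" and "1 \<le> k" and "k \<le> n - 4"
    and "is_seed n s" and "s \<notin> Hub n" and "height n s = k"
  shows "follows (PATH n) (tilde n s) (W n k) \<and> act (W n k) (tilde n s) = psi_last n s"
  using W_traverses_all[OF assms(1-3)] assms(4,6) by (simp add: W_traverses_def walk_def)

end
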